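(* For every positive integer $d$ there is a constant $C_d$ such that for every positive integer $n$, every subposet of the $\mathbf{n^{d+1}}$-grid whose dimension is at most $d$ has at most $C_d n^d$ elements.
   Context: $[n]$ denotes $\{0,1,\ldots,n-1\}$. The $\mathbf{n^{k}}$-grid is the poset on $[n]^{k}$ with the product order: $(x_1,\ldots,x_k)\le(y_1,\ldots,y_k)$ iff $x_i\le y_i$ for all $i$. A subposet is a subset with the induced order. The dimension of a poset $P$ is the least integer $d$ such that there are $d$ linear extensions of $P$ whose intersection is $P$. *)

theory Defs
  imports Complex_Main
begin

definition grid :: "nat \<Rightarrow> nat \<Rightarrow> nat list set" where
  "grid n k = {x. length x = k \<and> (\<forall>i<k. x ! i < n)}"

definition grid_le :: "nat list rel" where
  "grid_le = {(x, y). length x = length y \<and> (\<forall>i<length x. x ! i \<le> y ! i)}"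

definition linear_extension :: "'a set \<Rightarrow> 'a rel \<Rightarrow> 'a rel \<Rightarrow> bool" where
  "linear_extension S R L \<longleftrightarrow> linear_order_on S L \<and> R \<subseteq> L"

definition order_dim :: "'a set \<Rightarrow> 'a rel \<Rightarrow> nat" where
  "order_dim S R = (LEAST k. \<exists>Ls :: nat \<Rightarrow> 'a rel.
      (\<forall>i<k. linear_extension S R (Ls i)) \<and> (S \<times> S) \<inter> (\<Inter>i<k. Ls i) = R)"

end

theory Submission
  imports Defs "HOL-Library.List_Lexorder" "HOL-Library.Product_Lexorder"
begin

text \<open>
  Suppose a subposet S of the grid contains points a_0, ..., a_d and b_0, ..., b_d with
  a_i < b_j exactly when i ~= j (a standard example). Then S has no realizer by d linear
  extensions: some extension would reverse two of the pairs (a_i, b_i) and (a_j, b_j), and then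
  a_i < b_j < a_j < b_i in it. Such points are supplied by any copy of a fixed pattern of
  2(d+1) points, so a subposet of dimension at most d avoids that pattern.

  The bound is then the multidimensional Marcus-Tardos theorem of Klazar and Marcus: a subset
  of the grid n^(D+1) avoiding a fixed finite pattern P has O(n^D) points. Contract the grid
  into blocks of side t; the contracted set still avoids P. A block with fewer than |P|
  values in each coordinate holds boundedly many points. The remaining blocks are counted per
  coordinate m, block row and |P|-set K of values of coordinate m: those containing all of K
  avoid the pattern obtained by deleting coordinate m, since the values in K can realise the
  order of P in that coordinate. Induction on the dimension bounds them, and a large enough
  t turns the resulting recurrence into the bound C n^D.
\<close>

section \<open>Grids and the standard example\<close>

lemma grid_eq_lists: "grid n D = {xs. set xs \<subseteq> {..<n} \<and> length xs = D}"
  unfolding grid_def by (auto simp: in_set_conv_nth subset_iff)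

lemma finite_grid [simp]: "finite (grid n D)"
  unfolding grid_eq_lists by (rule finite_lists_length_eq) simp

lemma card_grid: "card (grid n D) = n ^ D"
  unfolding grid_eq_lists by (subst card_lists_length_eq) simp_all

lemma length_grid: "x \<in> grid n D \<Longrightarrow> length x = D"
  unfolding grid_def by simp

lemma order_dim_realizer:
  fixes k :: nat
  assumes "\<forall>l<k. linear_extension S R (Ls l)" and "(S \<times> S) \<inter> (\<Inter>l<k. Ls l) = R"
  obtains Ls' where "\<forall>l<order_dim S R. linear_extension S R (Ls' l)"
    and "(S \<times> S) \<inter> (\<Inter>l<order_dim S R. Ls' l) = R"
proof -
  have "\<exists>Ls. (\<forall>l<order_dim S R. linear_extension S R (Ls l)) \<and>
      (S \<times> S) \<inter> (\<Inter>l<order_dim S R. Ls l) = R"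
    unfolding order_dim_def by (rule LeastI[of _ k]) (use assms in blast)
  then show thesis using that by blast
qed

lemma card_standard_example_le_realizer:
  assumes ext: "\<forall>l<k. linear_extension S R (Ls l)"
    and inter: "(S \<times> S) \<inter> (\<Inter>l<k. Ls l) = R"
    and I: "finite I" and ab: "\<forall>i\<in>I. a i \<in> S \<and> b i \<in> S"
    and cross: "\<forall>i\<in>I. \<forall>j\<in>I. i \<noteq> j \<longrightarrow> (a i, b j) \<in> R"
    and incomparable: "\<forall>i\<in>I. (a i, b i) \<notin> R"
  shows "card I \<le> k"
proof (rule ccontr)
  assume "\<not> card I \<le> k"
  have "\<forall>i\<in>I. \<exists>l<k. (a i, b i) \<notin> Ls l"
    using ab incomparable inter by blast
  then obtain c where c: "\<forall>i\<in>I. c i < k \<and> (a i, b i) \<notin> Ls (c i)" by metis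
  have "\<not> inj_on c I"
  proof
    assume "inj_on c I"
    then have "card I = card (c ` I)" by (simp add: card_image)
    also have "\<dots> \<le> card {..<k}" using c by (intro card_mono) auto
    finally show False using \<open>\<not> card I \<le> k\<close> by simp
  qed
  then obtain i j where ij: "i \<in> I" "j \<in> I" "i \<noteq> j" "c i = c j"
    unfolding inj_on_def by blast
  define L where "L = Ls (c i)"
  have "linear_order_on S L" and "R \<subseteq> L"
    using ext c ij unfolding L_def linear_extension_def by auto
  then have refl: "refl_on S L" and total: "total_on S L" and trans: "trans L"
    unfolding linear_order_on_def partial_order_on_def preorder_on_def by auto
  have not_ii: "(a i, b i) \<notin> L" and not_jj: "(a j, b j) \<notin> L"
    using c ij unfolding L_def by auto
  \<comment> \<open>reversing both pairs would give a i < b j < a j < b i in L\<close>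
  have "a j \<noteq> b j" using not_jj refl ab ij by (metis refl_onD)
  then have "(b j, a j) \<in> L" using total not_jj ab ij unfolding total_on_def by blast
  moreover have "(a i, b j) \<in> L" and "(a j, b i) \<in> L" using cross ij \<open>R \<subseteq> L\<close> by auto
  ultimately have "(a i, b i) \<in> L" using trans by (meson transD)
  then show False using not_ii by contradiction
qed

lemma less_eq_list_if_pointwise:
  fixes x y :: "'a::linorder list"
  assumes "length x = length y" and "\<forall>i<length x. x ! i \<le> y ! i"
  shows "x \<le> y"
  using assms
proof (induction x arbitrary: y)
  case (Cons a x)
  then obtain b y' where y: "y = b # y'" by (cases y) auto
  have "a \<le> b" using Cons.prems(2)[rule_format, of 0] y by simp
  moreover have "x \<le> y'" using Cons.IH[of y'] Cons.prems y by force
  ultimately show ?case using y by (auto simp: less_eq_list_code order_le_less)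
qed simp

definition coord_lex :: "nat list set \<Rightarrow> nat \<Rightarrow> nat list rel" where
  "coord_lex S i = {(x, y). x \<in> S \<and> y \<in> S \<and> (x ! i, x) \<le> (y ! i, y)}"

lemma grid_le_imp_coord_lex:
  assumes "(x, y) \<in> Restr grid_le S" and "i < length x"
  shows "(x, y) \<in> coord_lex S i"
proof -
  have "length x = length y" and le: "\<forall>i<length x. x ! i \<le> y ! i" and "x \<in> S" "y \<in> S"
    using assms(1) unfolding grid_le_def by auto
  then have "x \<le> y" by (intro less_eq_list_if_pointwise)
  then show ?thesis using le assms(2) \<open>x \<in> S\<close> \<open>y \<in> S\<close>
    unfolding coord_lex_def by (auto simp: less_eq_prod_def)
qed

lemma linear_extension_coord_lex:
  assumes "\<forall>x\<in>S. length x = D" and "i < D"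
  shows "linear_extension S (Restr grid_le S) (coord_lex S i)"
  unfolding linear_extension_def linear_order_on_def partial_order_on_def preorder_on_def
    refl_on_def trans_def antisym_def total_on_def
proof (intro conjI ballI allI impI subsetI)
  fix p assume "p \<in> Restr grid_le S"
  then show "p \<in> coord_lex S i" using assms grid_le_imp_coord_lex by force
qed (auto simp: coord_lex_def less_eq_prod_def)

lemma Inter_coord_lex:
  assumes "\<forall>x\<in>S. length x = D"
  shows "(S \<times> S) \<inter> (\<Inter>i<D. coord_lex S i) = Restr grid_le S"
proof (intro equalityI subsetI)
  fix p assume p: "p \<in> (S \<times> S) \<inter> (\<Inter>i<D. coord_lex S i)"
  then obtain x y where xy: "p = (x, y)" "x \<in> S" "y \<in> S" by auto
  have "x ! i \<le> y ! i" if "i < D" for i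
  proof -
    have "(x, y) \<in> coord_lex S i" using p xy that by auto
    then show ?thesis unfolding coord_lex_def less_eq_prod_def by auto
  qed
  then show "p \<in> Restr grid_le S" using xy assms unfolding grid_le_def by auto
next
  fix p assume "p \<in> Restr grid_le S"
  then show "p \<in> (S \<times> S) \<inter> (\<Inter>i<D. coord_lex S i)"
    using assms grid_le_imp_coord_lex by fastforce
qed

section \<open>Pattern avoidance\<close>

text \<open>
  For permutation patterns, where no two points share a coordinate value, this is the usual
  containment of Marcus-Tardos and Klazar-Marcus; in general only strict comparisons survive.
\<close>
definition contains_pattern :: "nat \<Rightarrow> nat list set \<Rightarrow> nat list set \<Rightarrow> bool" where
  "contains_pattern D P S \<longleftrightarrow> (\<exists>f. f ` P \<subseteq> S \<and>
      (\<forall>u\<in>P. \<forall>v\<in>P. \<forall>m<D. u ! m < v ! m \<longrightarrow> f u ! m < f v ! m))"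

text \<open>
  Lower point i is 2 e_i, upper point j is 3 - 2 e_j: they are strictly comparable in every
  coordinate iff i ~= j, while the upper point i lies below the lower point i in coordinate i.
\<close>
definition standard_lower :: "nat \<Rightarrow> nat \<Rightarrow> nat list" where
  "standard_lower D i = map (\<lambda>m. if m = i then 2 else 0) [0..<D]"

definition standard_upper :: "nat \<Rightarrow> nat \<Rightarrow> nat list" where
  "standard_upper D j = map (\<lambda>m. if m = j then 1 else 3) [0..<D]"

definition standard_pattern :: "nat \<Rightarrow> nat list set" where
  "standard_pattern D = standard_lower D ` {..<D} \<union> standard_upper D ` {..<D}"

lemma order_dim_ge_if_contains_standard_pattern:
  assumes S: "S \<subseteq> grid n D" and "contains_pattern D (standard_pattern D) S"
  shows "D \<le> order_dim S (Restr grid_le S)"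
proof -
  obtain f where f_in: "f ` standard_pattern D \<subseteq> S"
    and f_mono: "\<forall>u\<in>standard_pattern D. \<forall>v\<in>standard_pattern D. \<forall>m<D.
        u ! m < v ! m \<longrightarrow> f u ! m < f v ! m"
    using assms(2) unfolding contains_pattern_def by blast
  define a where "a i = f (standard_lower D i)" for i
  define b where "b j = f (standard_upper D j)" for j
  have lengths: "\<forall>x\<in>S. length x = D" using S length_grid by blast
  have pattern: "standard_lower D i \<in> standard_pattern D" "standard_upper D i \<in> standard_pattern D"
    if "i < D" for i
    using that unfolding standard_pattern_def by auto
  have ab: "\<forall>i\<in>{..<D}. a i \<in> S \<and> b i \<in> S"
    using f_in pattern unfolding a_def b_def by auto
  have cross: "(a i, b j) \<in> Restr grid_le S" if "i < D" "j < D" "i \<noteq> j" for i j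
  proof -
    have "a i ! m < b j ! m" if "m < D" for m
      using f_mono pattern \<open>i < D\<close> \<open>j < D\<close> \<open>i \<noteq> j\<close> that
      unfolding a_def b_def standard_lower_def standard_upper_def by auto
    then show ?thesis using ab lengths that unfolding grid_le_def by (auto intro: less_imp_le)
  qed
  have incomparable: "(a i, b i) \<notin> Restr grid_le S" if "i < D" for i
  proof -
    have "b i ! i < a i ! i"
      using f_mono pattern that unfolding a_def b_def standard_lower_def standard_upper_def by auto
    then show ?thesis using that ab lengths unfolding grid_le_def by (auto simp: not_le)
  qed
  have "\<forall>l<D. linear_extension S (Restr grid_le S) (coord_lex S l)"
    using linear_extension_coord_lex lengths by blast
  then obtain Ls where "\<forall>l<order_dim S (Restr grid_le S). linear_extension S (Restr grid_le S) (Ls l)"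
    and "(S \<times> S) \<inter> (\<Inter>l<order_dim S (Restr grid_le S). Ls l) = Restr grid_le S"
    by (rule order_dim_realizer[OF _ Inter_coord_lex[OF lengths]])
  from card_standard_example_le_realizer[OF this, of "{..<D}" a b] ab cross incomparable
  show ?thesis by auto
qed

definition avoidance_bound :: "nat \<Rightarrow> nat list set \<Rightarrow> nat \<Rightarrow> bool" where
  "avoidance_bound D P C \<longleftrightarrow> (\<forall>n S. S \<subseteq> grid n (Suc D) \<longrightarrow>
      \<not> contains_pattern (Suc D) P S \<longrightarrow> card S \<le> C * n ^ D)"

lemma monotone_map_into_larger_set:
  fixes h :: "'a \<Rightarrow> 'b::linorder" and K :: "'c::linorder set"
  assumes "finite P" "finite K" "card P \<le> card K"
  obtains \<rho> where "\<rho> ` P \<subseteq> K" and "\<forall>u\<in>P. \<forall>v\<in>P. h u < h v \<longrightarrow> \<rho> u < \<rho> v"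
proof -
  define V where "V = h ` P"
  define r where "r u = card {w\<in>V. w < h u}" for u
  define xs where "xs = sorted_list_of_set K"
  have "finite V" unfolding V_def using assms by simp
  have r_less: "r u < card P" if "u \<in> P" for u
  proof -
    have "{w\<in>V. w < h u} \<subset> V" using that unfolding V_def by auto
    then have "r u < card V" unfolding r_def using \<open>finite V\<close> by (simp add: psubset_card_mono)
    also have "card V \<le> card P" unfolding V_def using assms by (simp add: card_image_le)
    finally show ?thesis .
  qed
  have r_mono: "r u < r v" if "u \<in> P" "v \<in> P" "h u < h v" for u v
  proof -
    have "{w\<in>V. w < h u} \<subset> {w\<in>V. w < h v}" using that unfolding V_def by auto
    then show ?thesis unfolding r_def using \<open>finite V\<close> by (simp add: psubset_card_mono)
  qed
  have xs: "length xs = card K" "sorted_wrt (<) xs" "set xs = K"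
    unfolding xs_def using assms by (simp_all add: strict_sorted_list_of_set)
  have r_index: "r u < length xs" if "u \<in> P" for u
    using r_less[OF that] assms(3) xs(1) by linarith
  show thesis
  proof (rule that[of "\<lambda>u. xs ! r u"])
    show "(\<lambda>u. xs ! r u) ` P \<subseteq> K" using r_index xs(3) nth_mem by blast
    show "\<forall>u\<in>P. \<forall>v\<in>P. h u < h v \<longrightarrow> xs ! r u < xs ! r v"
      using r_index r_mono xs(2) by (simp add: sorted_wrt_nth_less)
  qed
qed

lemma avoidance_bound_0:
  assumes "finite P"
  shows "avoidance_bound 0 P (card P)"
  unfolding avoidance_bound_def
proof (intro allI impI)
  fix n S assume S: "S \<subseteq> grid n (Suc 0)" and avoid: "\<not> contains_pattern (Suc 0) P S"
  have singleton: "\<exists>a. x = [a]" if "x \<in> S" for x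
  proof -
    have "length x = Suc 0" using S that length_grid by blast
    then show ?thesis by (simp add: length_Suc_conv)
  qed
  define K where "K = (\<lambda>x. x ! 0) ` S"
  have "inj_on (\<lambda>x. x ! 0) S"
  proof (rule inj_onI)
    fix x y assume "x \<in> S" "y \<in> S" "x ! 0 = y ! 0"
    then show "x = y" using singleton[of x] singleton[of y] by auto
  qed
  then have card_K: "card K = card S" unfolding K_def by (simp add: card_image)
  have "finite K" unfolding K_def using finite_subset[OF S finite_grid] by simp
  show "card S \<le> card P * n ^ 0"
  proof (rule ccontr)
    assume "\<not> ?thesis"
    then have "card P \<le> card K" using card_K by simp
    then obtain \<rho> where \<rho>: "\<rho> ` P \<subseteq> K" "\<forall>u\<in>P. \<forall>v\<in>P. u ! 0 < v ! 0 \<longrightarrow> \<rho> u < \<rho> v"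
      by (rule monotone_map_into_larger_set[OF assms \<open>finite K\<close>, where h = "\<lambda>u. u ! 0"])
    have "[\<rho> u] \<in> S" if "u \<in> P" for u
    proof -
      have "\<rho> u \<in> K" using \<rho>(1) that by blast
      then obtain x where "\<rho> u = x ! 0" "x \<in> S" unfolding K_def by (rule imageE)
      then show ?thesis using singleton[of x] by auto
    qed
    then have "contains_pattern (Suc 0) P S"
      unfolding contains_pattern_def using \<rho>(2) by (intro exI[of _ "\<lambda>u. [\<rho> u]"]) (simp add: image_subset_iff)
    then show False using avoid by contradiction
  qed
qed

definition delete_nth :: "nat \<Rightarrow> 'a list \<Rightarrow> 'a list" where
  "delete_nth m x = take m x @ drop (Suc m) x"

lemma length_delete_nth [simp]: "m < length x \<Longrightarrow> length (delete_nth m x) = length x - 1"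
  unfolding delete_nth_def by simp

lemma nth_delete_nth:
  "m < length x \<Longrightarrow> i < length x - 1 \<Longrightarrow> delete_nth m x ! i = (if i < m then x ! i else x ! Suc i)"
  unfolding delete_nth_def by (auto simp: nth_append min_def)

lemma delete_nth_in_grid: "x \<in> grid n (Suc D) \<Longrightarrow> m < Suc D \<Longrightarrow> delete_nth m x \<in> grid n D"
  unfolding grid_def by (auto simp: nth_delete_nth)

lemma delete_nth_eq_imp_eq:
  assumes "length x = length y" "m < length x" "x ! m = y ! m" "delete_nth m x = delete_nth m y"
  shows "x = y"
proof -
  have "take m x = take m y \<and> drop (Suc m) x = drop (Suc m) y"
    using assms(4) assms(1,2) unfolding delete_nth_def by (simp add: append_eq_append_conv)
  then show ?thesis using assms(1-3) by (metis id_take_nth_drop)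
qed

lemma nth_delete_nth_reindex:
  assumes "m < Suc D" "m' < Suc D" "m' \<noteq> m"
  obtains i where "i < D" and "\<forall>y. length y = Suc D \<longrightarrow> delete_nth m y ! i = y ! m'"
proof (cases "m' < m")
  case True
  then show thesis using assms that[of m'] by (auto simp: nth_delete_nth)
next
  case False
  then have "\<not> m' - 1 < m" "Suc (m' - 1) = m'" "m' - 1 < D" using assms by auto
  then show thesis using assms that[of "m' - 1"] by (simp add: nth_delete_nth)
qed

section \<open>Contraction into blocks\<close>

definition contract :: "nat \<Rightarrow> nat list \<Rightarrow> nat list" where
  "contract t x = map (\<lambda>v. v div t) x"

lemma length_contract [simp]: "length (contract t x) = length x"
  unfolding contract_def by simp

lemma nth_contract [simp]: "m < length x \<Longrightarrow> contract t x ! m = x ! m div t"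
  unfolding contract_def by simp

lemma contract_in_grid: "x \<in> grid n D \<Longrightarrow> contract t x \<in> grid ((n - 1) div t + 1) D"
  unfolding grid_def by (auto simp: less_Suc_eq_le intro!: div_le_mono)

lemma less_if_contract_less:
  assumes "m < length x" "m < length y" "contract t x ! m < contract t y ! m"
  shows "x ! m < y ! m"
  using assms by (metis div_le_mono not_le nth_contract)

lemma contains_pattern_if_contract:
  assumes lengths: "\<forall>x\<in>S. length x = D" and "contains_pattern D P (contract t ` S)"
  shows "contains_pattern D P S"
proof -
  obtain f where f: "f ` P \<subseteq> contract t ` S"
    and f_mono: "\<forall>u\<in>P. \<forall>v\<in>P. \<forall>m<D. u ! m < v ! m \<longrightarrow> f u ! m < f v ! m"
    using assms(2) unfolding contains_pattern_def by blast
  have "\<exists>x. x \<in> S \<and> f u = contract t x" if "u \<in> P" for u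
  proof -
    have "f u \<in> contract t ` S" using f that by (simp add: image_subset_iff)
    then obtain x where "f u = contract t x" "x \<in> S" by (rule imageE)
    then show ?thesis by blast
  qed
  then obtain g where g: "\<forall>u\<in>P. g u \<in> S \<and> f u = contract t (g u)" by metis
  have "g ` P \<subseteq> S" using g by blast
  moreover have "g u ! m < g v ! m" if "u \<in> P" "v \<in> P" "m < D" "u ! m < v ! m" for u v m
    using less_if_contract_less[of m "g u" "g v" t] f_mono g lengths that by auto
  ultimately show ?thesis unfolding contains_pattern_def by blast
qed

definition block :: "nat \<Rightarrow> nat list set \<Rightarrow> nat list \<Rightarrow> nat list set" where
  "block t S \<beta> = {x \<in> S. contract t x = \<beta>}"

definition block_values :: "nat \<Rightarrow> nat list set \<Rightarrow> nat \<Rightarrow> nat list \<Rightarrow> nat set" where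
  "block_values t S m \<beta> = (\<lambda>x. x ! m) ` block t S \<beta>"

lemma block_values_subset:
  assumes "t > 0" "m < length \<beta>"
  shows "block_values t S m \<beta> \<subseteq> {\<beta> ! m * t ..< \<beta> ! m * t + t}"
proof
  fix v assume "v \<in> block_values t S m \<beta>"
  then obtain x where "contract t x = \<beta>" "v = x ! m"
    unfolding block_values_def block_def by blast
  then have "v div t = \<beta> ! m" using assms(2) by auto
  moreover have "v div t * t + v mod t = v" and "v mod t < t"
    using assms(1) by simp_all
  ultimately show "v \<in> {\<beta> ! m * t ..< \<beta> ! m * t + t}" by auto
qed

lemma card_block_values_le: "t > 0 \<Longrightarrow> m < length \<beta> \<Longrightarrow> card (block_values t S m \<beta>) \<le> t"
  using card_mono[OF _ block_values_subset] by fastforce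

lemma card_le_of_coordinate_values:
  assumes "finite A" and "\<forall>x\<in>A. length x = L" and "\<forall>m<L. card ((\<lambda>x. x ! m) ` A) \<le> c"
  shows "card A \<le> (L * c) ^ L"
proof -
  define U where "U = (\<Union>m<L. (\<lambda>x. x ! m) ` A)"
  have "finite U" using assms(1) unfolding U_def by simp
  have "card U \<le> (\<Sum>m<L. card ((\<lambda>x. x ! m) ` A))" unfolding U_def by (rule card_UN_le) simp
  also have "\<dots> \<le> (\<Sum>m<L. c)" using assms(3) by (intro sum_mono) simp
  also have "\<dots> = L * c" by simp
  finally have card_U: "card U \<le> L * c" .
  have "A \<subseteq> {xs. set xs \<subseteq> U \<and> length xs = L}"
    using assms(2) unfolding U_def by (fastforce simp: in_set_conv_nth)
  then have "card A \<le> card {xs. set xs \<subseteq> U \<and> length xs = L}"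
    using \<open>finite U\<close> by (intro card_mono) (simp_all add: finite_lists_length_eq)
  also have "\<dots> = card U ^ L" using \<open>finite U\<close> by (simp add: card_lists_length_eq)
  also have "\<dots> \<le> (L * c) ^ L" using card_U by (rule power_mono) simp
  finally show ?thesis .
qed

lemma card_le_thin_and_wide_blocks:
  assumes "finite S" and lengths: "\<forall>x\<in>S. length x = L" and "t > 0"
  shows "card S \<le> (L * (k - 1)) ^ L * card (contract t ` S)
      + (L * t) ^ L * card {\<beta> \<in> contract t ` S. \<exists>m<L. k \<le> card (block_values t S m \<beta>)}"
    (is "_ \<le> ?M * card ?B + ?T * card ?W")
proof -
  have "finite ?B" using assms(1) by simp
  have block_bound: "card (block t S \<beta>) \<le> ?M + (if \<beta> \<in> ?W then ?T else 0)" if "\<beta> \<in> ?B" for \<beta>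
  proof -
    have "finite (block t S \<beta>)" and "\<forall>x\<in>block t S \<beta>. length x = L" and "length \<beta> = L"
      using assms that unfolding block_def by auto
    note card_block = card_le_of_coordinate_values[OF this(1,2)]
    show ?thesis
    proof (cases "\<beta> \<in> ?W")
      case True
      have "card (block t S \<beta>) \<le> ?T"
        using card_block card_block_values_le \<open>t > 0\<close> \<open>length \<beta> = L\<close>
        unfolding block_values_def by blast
      then show ?thesis using True by simp
    next
      case False
      then have "\<forall>m<L. card (block_values t S m \<beta>) \<le> k - 1" using that by auto
      then have "card (block t S \<beta>) \<le> ?M"
        by (intro card_block) (simp add: block_values_def)
      then show ?thesis by simp
    qed
  qed
  have "S = (\<Union>\<beta>\<in>?B. block t S \<beta>)" unfolding block_def by auto
  then have "card S \<le> (\<Sum>\<beta>\<in>?B. card (block t S \<beta>))"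
    by (metis card_UN_le \<open>finite ?B\<close>)
  also have "\<dots> \<le> (\<Sum>\<beta>\<in>?B. ?M + (if \<beta> \<in> ?W then ?T else 0))"
    using block_bound by (rule sum_mono)
  also have "\<dots> = ?M * card ?B + ?T * card ?W"
    using \<open>finite ?B\<close> by (simp add: sum.distrib sum.inter_filter[symmetric] mult.commute)
  finally show ?thesis .
qed

text \<open>
  A copy of the projected pattern among blocks that all contain the values K in coordinate m
  lifts to a copy of P: inside the block of each point of P pick a point whose m-th coordinate
  is the image of the point's m-th coordinate under an order-preserving map into K.
\<close>
lemma delete_nth_wide_blocks_avoid:
  assumes "finite P" and lengths_P: "\<forall>u\<in>P. length u = Suc L"
    and lengths_S: "\<forall>x\<in>S. length x = Suc L"
    and avoid: "\<not> contains_pattern (Suc L) P S"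
    and m: "m < Suc L" and "finite K" and "card P \<le> card K"
    and W: "W \<subseteq> contract t ` S" and wide: "\<forall>\<beta>\<in>W. K \<subseteq> block_values t S m \<beta>"
  shows "\<not> contains_pattern L (delete_nth m ` P) (delete_nth m ` W)"
proof
  assume "contains_pattern L (delete_nth m ` P) (delete_nth m ` W)"
  then obtain g where g: "g ` delete_nth m ` P \<subseteq> delete_nth m ` W"
    and g_mono: "\<forall>u\<in>delete_nth m ` P. \<forall>v\<in>delete_nth m ` P. \<forall>i<L.
        u ! i < v ! i \<longrightarrow> g u ! i < g v ! i"
    unfolding contains_pattern_def by blast
  have "\<exists>\<beta>. \<beta> \<in> W \<and> g (delete_nth m u) = delete_nth m \<beta>" if "u \<in> P" for u
  proof -
    have "g (delete_nth m u) \<in> delete_nth m ` W" using g that by (simp add: image_subset_iff)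
    then obtain \<beta> where "g (delete_nth m u) = delete_nth m \<beta>" "\<beta> \<in> W" by (rule imageE)
    then show ?thesis by blast
  qed
  then obtain \<beta> where \<beta>: "\<forall>u\<in>P. \<beta> u \<in> W \<and> g (delete_nth m u) = delete_nth m (\<beta> u)" by metis
  obtain \<rho> where \<rho>_in: "\<rho> ` P \<subseteq> K" and \<rho>_mono: "\<forall>u\<in>P. \<forall>v\<in>P. u ! m < v ! m \<longrightarrow> \<rho> u < \<rho> v"
    by (rule monotone_map_into_larger_set[OF \<open>finite P\<close> \<open>finite K\<close> \<open>card P \<le> card K\<close>,
          where h = "\<lambda>u. u ! m"])
  have "\<exists>x. x \<in> block t S (\<beta> u) \<and> x ! m = \<rho> u" if "u \<in> P" for u
  proof -
    have "\<rho> u \<in> block_values t S m (\<beta> u)" using \<rho>_in wide \<beta> that by blast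
    then obtain x where "\<rho> u = x ! m" "x \<in> block t S (\<beta> u)"
      unfolding block_values_def by (rule imageE)
    then show ?thesis by auto
  qed
  then obtain x where x: "\<forall>u\<in>P. x u \<in> block t S (\<beta> u) \<and> x u ! m = \<rho> u" by metis
  have x_S: "x u \<in> S" and \<beta>_x: "\<beta> u = contract t (x u)" and length_x: "length (x u) = Suc L"
    if "u \<in> P" for u
    using x that lengths_S unfolding block_def by auto
  have "x u ! m' < x v ! m'" if uv: "u \<in> P" "v \<in> P" "m' < Suc L" "u ! m' < v ! m'" for u v m'
  proof (cases "m' = m")
    case True
    then show ?thesis using uv x \<rho>_mono by auto
  next
    case False
    obtain i where "i < L" and i: "\<forall>y::nat list. length y = Suc L \<longrightarrow> delete_nth m y ! i = y ! m'"
      using nth_delete_nth_reindex[OF m uv(3) False] by blast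
    have "delete_nth m u ! i = u ! m'" and "delete_nth m v ! i = v ! m'"
      using i uv(1,2) lengths_P by simp_all
    then have "delete_nth m u ! i < delete_nth m v ! i" using uv by simp
    then have "g (delete_nth m u) ! i < g (delete_nth m v) ! i"
      using g_mono uv \<open>i < L\<close> by blast
    then have "contract t (x u) ! m' < contract t (x v) ! m'"
      using \<beta> \<beta>_x i length_x uv by (metis length_contract)
    then show ?thesis using less_if_contract_less length_x uv by metis
  qed
  then have "contains_pattern (Suc L) P S"
    unfolding contains_pattern_def using x_S by (intro exI[of _ x]) blast
  then show False using avoid by contradiction
qed

lemma inj_on_delete_nth:
  assumes "\<forall>x\<in>W. length x = L" and "m < L" and "\<forall>x\<in>W. x ! m = s"
  shows "inj_on (delete_nth m) W"
proof (rule inj_onI)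
  fix x y assume "x \<in> W" "y \<in> W" "delete_nth m x = delete_nth m y"
  then show "x = y" using assms by (intro delete_nth_eq_imp_eq[of x y m]) auto
qed

lemma card_many_values_le:
  fixes h :: "'b \<Rightarrow> nat" and V :: "'b \<Rightarrow> nat set"
  assumes "finite B" and h: "\<forall>\<beta>\<in>B. h \<beta> < N"
    and V: "\<forall>\<beta>\<in>B. V \<beta> \<subseteq> {h \<beta> * t..<h \<beta> * t + t}"
    and bound: "\<And>s K. K \<subseteq> {s * t..<s * t + t} \<Longrightarrow> card K = k \<Longrightarrow>
        card {\<beta>\<in>B. h \<beta> = s \<and> K \<subseteq> V \<beta>} \<le> X"
  shows "card {\<beta>\<in>B. k \<le> card (V \<beta>)} \<le> N * ((t choose k) * X)"
proof -
  define Ks where "Ks s = {K. K \<subseteq> {s * t..<s * t + t} \<and> card K = k}" for s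
  have finite_Ks: "finite (Ks s)" for s
    unfolding Ks_def by (rule finite_subset[of _ "Pow {s * t..<s * t + t}"]) auto
  have card_Ks: "card (Ks s) = t choose k" for s
    unfolding Ks_def by (subst n_subsets) simp_all
  define U where "U = (\<Union>s<N. \<Union>K\<in>Ks s. {\<beta>\<in>B. h \<beta> = s \<and> K \<subseteq> V \<beta>})"
  have "{\<beta>\<in>B. k \<le> card (V \<beta>)} \<subseteq> U"
  proof
    fix \<beta> assume \<beta>: "\<beta> \<in> {\<beta>\<in>B. k \<le> card (V \<beta>)}"
    then obtain K where K: "K \<subseteq> V \<beta>" "card K = k"
      using obtain_subset_with_card_n by (metis mem_Collect_eq)
    then have "K \<in> Ks (h \<beta>)" using V \<beta> unfolding Ks_def by auto
    then show "\<beta> \<in> U" unfolding U_def using h \<beta> K by blast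
  qed
  moreover have "finite U" unfolding U_def by (rule finite_subset[OF _ \<open>finite B\<close>]) auto
  ultimately have "card {\<beta>\<in>B. k \<le> card (V \<beta>)} \<le> card U" by (rule card_mono[rotated])
  also have "\<dots> \<le> (\<Sum>s<N. card (\<Union>K\<in>Ks s. {\<beta>\<in>B. h \<beta> = s \<and> K \<subseteq> V \<beta>}))"
    unfolding U_def by (rule card_UN_le) simp
  also have "\<dots> \<le> (\<Sum>s<N. \<Sum>K\<in>Ks s. card {\<beta>\<in>B. h \<beta> = s \<and> K \<subseteq> V \<beta>})"
    by (intro sum_mono card_UN_le finite_Ks)
  also have "\<dots> \<le> (\<Sum>s<N. \<Sum>K\<in>Ks s. X)"
    by (intro sum_mono bound) (simp_all add: Ks_def)
  also have "\<dots> = N * ((t choose k) * X)" by (simp add: card_Ks)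
  finally show ?thesis .
qed

lemma card_wide_blocks_le:
  fixes D t n :: nat
  defines "N \<equiv> (n - 1) div t + 1"
  assumes "finite P" and lengths_P: "\<forall>u\<in>P. length u = Suc (Suc D)"
    and bound: "avoidance_bound D (delete_nth m ` P) C" and m: "m < Suc (Suc D)"
    and "t > 0" and S: "S \<subseteq> grid n (Suc (Suc D))"
    and avoid: "\<not> contains_pattern (Suc (Suc D)) P S"
  shows "card {\<beta> \<in> contract t ` S. card P \<le> card (block_values t S m \<beta>)}
    \<le> N * ((t choose card P) * (C * N ^ D))"
proof (rule card_many_values_le[where h = "\<lambda>\<beta>. \<beta> ! m"])
  have lengths_S: "\<forall>x\<in>S. length x = Suc (Suc D)" using S length_grid by blast
  have B_grid: "contract t ` S \<subseteq> grid N (Suc (Suc D))"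
    using S contract_in_grid unfolding N_def by blast
  show "finite (contract t ` S)" using S finite_subset by fastforce
  show "\<forall>\<beta>\<in>contract t ` S. \<beta> ! m < N" using B_grid m unfolding grid_def by auto
  show "\<forall>\<beta>\<in>contract t ` S. block_values t S m \<beta> \<subseteq> {\<beta> ! m * t..<\<beta> ! m * t + t}"
    using m lengths_S by (intro ballI block_values_subset[OF \<open>t > 0\<close>]) auto
  fix s K assume K: "K \<subseteq> {s * t..<s * t + t}" "card K = card P"
  define W where "W = {\<beta> \<in> contract t ` S. \<beta> ! m = s \<and> K \<subseteq> block_values t S m \<beta>}"
  have "finite K" using K(1) finite_subset by blast
  have "\<not> contains_pattern (Suc D) (delete_nth m ` P) (delete_nth m ` W)"
    by (rule delete_nth_wide_blocks_avoid[OF \<open>finite P\<close> lengths_P lengths_S avoid m \<open>finite K\<close>])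
      (auto simp: K W_def)
  moreover have "delete_nth m ` W \<subseteq> grid N (Suc D)"
    using B_grid delete_nth_in_grid m unfolding W_def by blast
  ultimately have "card (delete_nth m ` W) \<le> C * N ^ D"
    using bound unfolding avoidance_bound_def by blast
  moreover have "inj_on (delete_nth m) W"
    by (rule inj_on_delete_nth[OF _ m, where s = s]) (use B_grid length_grid in \<open>auto simp: W_def\<close>)
  ultimately show "card {\<beta> \<in> contract t ` S. \<beta> ! m = s \<and> K \<subseteq> block_values t S m \<beta>} \<le> C * N ^ D"
    unfolding W_def[symmetric] by (simp add: card_image)
qed

lemma card_contraction_recurrence:
  fixes D t n :: nat
  defines "L \<equiv> Suc (Suc D)" and "N \<equiv> (n - 1) div t + 1"
  assumes "finite P" and lengths_P: "\<forall>u\<in>P. length u = L"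
    and bounds: "\<forall>m<L. avoidance_bound D (delete_nth m ` P) (Cq m)"
    and "t > 0" and S: "S \<subseteq> grid n L" and avoid: "\<not> contains_pattern L P S"
  shows "card S \<le> (L * (card P - 1)) ^ L * card (contract t ` S)
      + (L * t) ^ L * (t choose card P) * (\<Sum>m<L. Cq m) * N ^ Suc D"
proof -
  define wide where "wide m = {\<beta> \<in> contract t ` S. card P \<le> card (block_values t S m \<beta>)}" for m
  have "finite S" by (rule finite_subset[OF S finite_grid])
  have "\<forall>x\<in>S. length x = L" using S length_grid by blast
  then have "card S \<le> (L * (card P - 1)) ^ L * card (contract t ` S)
      + (L * t) ^ L * card {\<beta> \<in> contract t ` S. \<exists>m<L. card P \<le> card (block_values t S m \<beta>)}"
    by (rule card_le_thin_and_wide_blocks[OF \<open>finite S\<close> _ \<open>t > 0\<close>])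
  also have "{\<beta> \<in> contract t ` S. \<exists>m<L. card P \<le> card (block_values t S m \<beta>)} = (\<Union>m<L. wide m)"
    unfolding wide_def by auto
  finally have card_S: "card S \<le> (L * (card P - 1)) ^ L * card (contract t ` S)
      + (L * t) ^ L * card (\<Union>m<L. wide m)" .
  have "card (\<Union>m<L. wide m) \<le> (\<Sum>m<L. card (wide m))" by (rule card_UN_le) simp
  also have "\<dots> \<le> (\<Sum>m<L. N ^ Suc D * (t choose card P) * Cq m)"
  proof (rule sum_mono)
    fix m assume "m \<in> {..<L}"
    then have "card (wide m) \<le> N * ((t choose card P) * (Cq m * N ^ D))"
      unfolding wide_def N_def
      using card_wide_blocks_le[OF \<open>finite P\<close> _ _ _ \<open>t > 0\<close>] lengths_P bounds S avoid
      unfolding L_def by blast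
    then show "card (wide m) \<le> N ^ Suc D * (t choose card P) * Cq m"
      by (simp add: algebra_simps)
  qed
  also have "\<dots> = N ^ Suc D * (t choose card P) * (\<Sum>m<L. Cq m)"
    by (simp add: sum_distrib_left)
  finally have "(L * t) ^ L * card (\<Union>m<L. wide m)
      \<le> (L * t) ^ L * (N ^ Suc D * (t choose card P) * (\<Sum>m<L. Cq m))"
    by (rule mult_left_mono) simp
  with card_S have "card S \<le> (L * (card P - 1)) ^ L * card (contract t ` S)
      + (L * t) ^ L * (N ^ Suc D * (t choose card P) * (\<Sum>m<L. Cq m))"
    by linarith
  then show ?thesis by (simp only: mult_ac)
qed

section \<open>Solving the recurrence\<close>

lemma contracted_side_bounds:
  fixes n t :: nat
  assumes "2 \<le> t" and "t \<le> n"
  shows "(n - 1) div t + 1 < n" and "t * ((n - 1) div t + 1) \<le> 2 * n"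
proof -
  have "(n - 1) div t < n - 1" using assms by (intro div_less_dividend) auto
  then show "(n - 1) div t + 1 < n" by simp
  have "t * ((n - 1) div t) \<le> n - 1" by simp
  moreover have "t * ((n - 1) div t + 1) = t * ((n - 1) div t) + t" by simp
  ultimately show "t * ((n - 1) div t + 1) \<le> 2 * n" using assms by linarith
qed

lemma block_side_large_enough:
  fixes D k :: nat
  assumes "D \<ge> 1" and "k \<ge> 1"
  shows "(Suc D * (k - 1)) ^ Suc D * 2 ^ D + 1 \<le> (2 * (Suc D * k) ^ 2) ^ D"
proof -
  define a where "a = Suc D * k"
  define X where "X = (Suc D * (k - 1)) ^ Suc D"
  have "Suc D * (k - 1) < a" unfolding a_def using assms by (intro mult_strict_left_mono) auto
  then have "X < a ^ Suc D" unfolding X_def by (rule power_strict_mono) simp_all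
  also have "a ^ Suc D \<le> a ^ (2 * D)" using assms unfolding a_def by (intro power_increasing) simp_all
  finally have "X + 1 \<le> a ^ (2 * D)" by simp
  then have "(X + 1) * 2 ^ D \<le> a ^ (2 * D) * 2 ^ D" by (rule mult_right_mono) simp
  moreover have "X * 2 ^ D + 1 \<le> (X + 1) * 2 ^ D" by simp
  moreover have "(2 * a ^ 2) ^ D = a ^ (2 * D) * 2 ^ D"
    by (simp add: power_mult_distrib power_mult)
  ultimately show ?thesis unfolding X_def a_def by linarith
qed

lemma card_le_of_contraction_recurrence:
  fixes Q :: "nat list set \<Rightarrow> bool" and E t M K C :: nat
  assumes "2 \<le> t" and "t \<le> C" and "M * 2 ^ E + 1 \<le> t ^ E" and "K * 2 ^ E \<le> C"
    and closed: "\<And>n S. S \<subseteq> grid n (Suc E) \<Longrightarrow> Q S \<Longrightarrow> Q (contract t ` S)"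
    and recurrence: "\<And>n S. S \<subseteq> grid n (Suc E) \<Longrightarrow> Q S \<Longrightarrow>
        card S \<le> M * card (contract t ` S) + K * ((n - 1) div t + 1) ^ E"
  shows "S \<subseteq> grid n (Suc E) \<Longrightarrow> Q S \<Longrightarrow> card S \<le> C * n ^ E"
proof (induction n arbitrary: S rule: less_induct)
  case (less n)
  show ?case
  proof (cases "n < t")
    case True
    have "card S \<le> card (grid n (Suc E))" by (rule card_mono[OF finite_grid less.prems(1)])
    also have "\<dots> = n * n ^ E" by (simp add: card_grid)
    also have "\<dots> \<le> C * n ^ E" using True \<open>t \<le> C\<close> by (intro mult_right_mono) simp_all
    finally show ?thesis .
  next
    case False
    define N where "N = (n - 1) div t + 1"
    have "N < n" and "t * N \<le> 2 * n"
      using contracted_side_bounds \<open>2 \<le> t\<close> False unfolding N_def by (simp_all add: not_less)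
    have "contract t ` S \<subseteq> grid N (Suc E)"
      using less.prems(1) unfolding N_def by (intro image_subsetI contract_in_grid) blast
    then have B: "card (contract t ` S) \<le> C * N ^ E"
      using less.IH[OF \<open>N < n\<close>] closed less.prems by blast
    have "card S \<le> M * card (contract t ` S) + K * N ^ E"
      using recurrence less.prems unfolding N_def by blast
    also have "\<dots> \<le> (M * C + K) * N ^ E"
      using B by (simp add: algebra_simps)
    finally have "card S * t ^ E \<le> (M * C + K) * (t * N) ^ E"
      by (simp add: power_mult_distrib)
    also have "\<dots> \<le> (M * C + K) * (2 * n) ^ E"
      using \<open>t * N \<le> 2 * n\<close> by (intro mult_left_mono power_mono) simp_all
    also have "\<dots> = (C * (M * 2 ^ E) + K * 2 ^ E) * n ^ E"
      by (simp add: power_mult_distrib algebra_simps)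
    also have "\<dots> \<le> (C * (M * 2 ^ E + 1)) * n ^ E" using assms(4) by simp
    also have "\<dots> \<le> (C * t ^ E) * n ^ E"
      using assms(3) by (intro mult_right_mono mult_left_mono) simp_all
    finally have "card S * t ^ E \<le> (C * n ^ E) * t ^ E" by (simp add: algebra_simps)
    moreover have "t ^ E > 0" using assms(3) by linarith
    ultimately show ?thesis using mult_le_cancel2 by blast
  qed
qed

lemma avoidance_bound_Suc:
  assumes "finite P" and lengths_P: "\<forall>u\<in>P. length u = Suc (Suc D)"
    and bounds: "\<forall>m<Suc (Suc D). avoidance_bound D (delete_nth m ` P) (Cq m)"
  shows "\<exists>C. avoidance_bound (Suc D) P C"
proof (cases "P = {}")
  case True
  then have "contains_pattern (Suc (Suc D)) P S" for S unfolding contains_pattern_def by simp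
  then show ?thesis unfolding avoidance_bound_def by blast
next
  case False
  define k where "k = card P"
  define t where "t = 2 * (Suc (Suc D) * k) ^ 2"
  define M where "M = (Suc (Suc D) * (k - 1)) ^ Suc (Suc D)"
  define K where "K = (Suc (Suc D) * t) ^ Suc (Suc D) * (t choose k) * (\<Sum>m<Suc (Suc D). Cq m)"
  define C where "C = max t (K * 2 ^ Suc D)"
  have "k \<ge> 1" using False \<open>finite P\<close> unfolding k_def by (simp add: Suc_le_eq card_gt_0_iff)
  then have "t \<ge> 2" unfolding t_def by simp
  have M_t: "M * 2 ^ Suc D + 1 \<le> t ^ Suc D"
    unfolding M_def t_def by (rule block_side_large_enough) (use \<open>k \<ge> 1\<close> in auto)
  have closed: "\<not> contains_pattern (Suc (Suc D)) P (contract t ` S)"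
    if "S \<subseteq> grid n (Suc (Suc D))" and "\<not> contains_pattern (Suc (Suc D)) P S" for n S
  proof -
    have "\<forall>x\<in>S. length x = Suc (Suc D)" using that(1) length_grid by blast
    then show ?thesis using contains_pattern_if_contract that(2) by blast
  qed
  have recurrence: "card S \<le> M * card (contract t ` S) + K * ((n - 1) div t + 1) ^ Suc D"
    if "S \<subseteq> grid n (Suc (Suc D))" and "\<not> contains_pattern (Suc (Suc D)) P S" for n S
    unfolding M_def K_def k_def
    by (rule card_contraction_recurrence[OF \<open>finite P\<close> lengths_P bounds _ that])
      (use \<open>t \<ge> 2\<close> in simp)
  have "card S \<le> C * n ^ Suc D"
    if "S \<subseteq> grid n (Suc (Suc D))" and "\<not> contains_pattern (Suc (Suc D)) P S" for n S
    by (rule card_le_of_contraction_recurrence[OF \<open>t \<ge> 2\<close> _ M_t _ closed recurrence that])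
      (simp_all add: C_def)
  then show ?thesis unfolding avoidance_bound_def by blast
qed

theorem avoidance_bound_exists:
  "finite P \<Longrightarrow> \<forall>u\<in>P. length u = Suc D \<Longrightarrow> \<exists>C. avoidance_bound D P C"
proof (induction D arbitrary: P)
  case 0
  then show ?case using avoidance_bound_0 by blast
next
  case (Suc D)
  have "\<exists>C. avoidance_bound D (delete_nth m ` P) C" if "m < Suc (Suc D)" for m
    using Suc.IH[of "delete_nth m ` P"] Suc.prems that by simp
  then obtain Cq where "\<forall>m<Suc (Suc D). avoidance_bound D (delete_nth m ` P) (Cq m)" by metis
  then show ?case using avoidance_bound_Suc Suc.prems by blast
qed

lemma card_bounded_dimension_grid_subposet:
  "\<exists>C. \<forall>n S. S \<subseteq> grid n (Suc d) \<longrightarrow> order_dim S (Restr grid_le S) \<le> d \<longrightarrow> card S \<le> C * n ^ d"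
proof -
  have "finite (standard_pattern (Suc d))" and "\<forall>u\<in>standard_pattern (Suc d). length u = Suc d"
    unfolding standard_pattern_def standard_lower_def standard_upper_def by auto
  then obtain C where C: "avoidance_bound d (standard_pattern (Suc d)) C"
    using avoidance_bound_exists by blast
  have "card S \<le> C * n ^ d"
    if S: "S \<subseteq> grid n (Suc d)" and "order_dim S (Restr grid_le S) \<le> d" for n S
  proof -
    have "\<not> contains_pattern (Suc d) (standard_pattern (Suc d)) S"
      using order_dim_ge_if_contains_standard_pattern[OF S] \<open>order_dim S (Restr grid_le S) \<le> d\<close>
      by (meson not_less_eq_eq order_trans)
    then show ?thesis using C S unfolding avoidance_bound_def by blast
  qed
  then show ?thesis by blast
qed

theorem mainTheorem4:
  shows "\<forall>d::nat. d \<ge> 1 \<longrightarrow> (\<exists>C::real. \<forall>n::nat. n \<ge> 1 \<longrightarrow>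
           (\<forall>S. S \<subseteq> grid n (d + 1) \<longrightarrow> order_dim S (Restr grid_le S) \<le> d \<longrightarrow>
              real (card S) \<le> C * real n ^ d))"
proof (intro allI impI)
  fix d :: nat
  obtain C where C: "\<forall>n S. S \<subseteq> grid n (Suc d) \<longrightarrow> order_dim S (Restr grid_le S) \<le> d \<longrightarrow>
      card S \<le> C * n ^ d"
    using card_bounded_dimension_grid_subposet by blast
  have "real (card S) \<le> real C * real n ^ d"
    if "S \<subseteq> grid n (d + 1)" and "order_dim S (Restr grid_le S) \<le> d" for n S
  proof -
    have "card S \<le> C * n ^ d" using C that by simp
    then have "real (card S) \<le> real (C * n ^ d)" by (simp only: of_nat_le_iff)
    then show ?thesis by simp
  qed
  then show "\<exists>C::real. \<forall>n. n \<ge> 1 \<longrightarrow> (\<forall>S. S \<subseteq> grid n (d + 1) \<longrightarrow>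
      order_dim S (Restr grid_le S) \<le> d \<longrightarrow> real (card S) \<le> C * real n ^ d)"
    by blast
qed

end
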